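(* Let $X$ be a topologically complete space and $\mathcal A$ a family of closed, locally finite, normal covers of $X$ satisfying conditions (I) and (II), with $\Lambda$, $N_\lambda$, $N_\infty$, $N^{(0)}_\infty$, $\mathrm{cov}_\lambda$, $\sigma_\lambda$, $\wedge$ and $\pi:N_\infty\to X$ as in the context. Then: (1) the map $\pi$ is continuous; (2) for $z,z'\in N^{(0)}_\infty$, $\pi(z')=\pi(z)$ if and only if $\wedge z'(\lambda)\in\mathrm{star}_{\mathrm{cov}_\lambda}(\wedge z(\lambda))$ (i.e. $\wedge z'(\lambda)\cap\wedge z(\lambda)\neq\emptyset$) for each $\lambda\in\Lambda$; (3) if $z\in N_\infty$ and $z_0\in N^{(0)}_\infty$ satisfy that $z_0(\lambda)$ is a vertex of $\sigma_\lambda(z(\lambda))$ for each $\lambda\in\Lambda$, then $\pi(z)=\pi(z_0)$.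
   Context: A topologically complete space is a Tychonoff space complete with respect to its finest uniformity. A closed, locally finite, normal cover $\alpha$ of $X$ is a locally finite cover by closed sets admitting a partition of unity $\{\phi_{\alpha,V}:V\in\alpha\}$ with $\mathrm{cl}(\phi_{\alpha,V}^{-1}((0,1]))\subset\mathrm{int}(V)$, $\sum_V\phi_{\alpha,V}=1$. For a cover $\alpha$ and a set $S$, $\mathrm{star}_\alpha(S)=\{V\in\alpha:V\cap S\neq\emptyset\}$; $\mathrm{star}_\alpha(x)=\mathrm{star}_\alpha(\{x\})$. Conditions: (I) for each open $U\subset X$ and $x\in U$ there is $\alpha\in\mathcal A$ with $\bigcup\mathrm{star}_\alpha(x)\subset U$; (II) if $f(\alpha)\in\alpha$ is chosen for each $\alpha\in\mathcal A$ and $\{f(\alpha)\}$ has the finite intersection property, then $\bigcap_\alpha f(\alpha)\neq\emptyset$. Construction: $\Lambda$ is the set of finite subsets of $\mathcal A$ directed by inclusion. For $\lambda\in\Lambda$, $N^{(0)}_\lambda$ is the set of functions $v$ on $\lambda$ with $v(\alpha)\in\alpha$ for all $\alpha\in\lambda$ and $\wedge v:=\bigcap_{\alpha\in\lambda}v(\alpha)\neq\emptyset$ (empty intersection meaning $X$); $\mathrm{cov}_\lambda=\{\wedge v:v\in N^{(0)}_\lambda\}$. $F_\lambda$ is the simplicial complex (weak topology) with vertex set $N^{(0)}_\lambda$ in which $\{v_1,\dots,v_k\}$ spans a simplex iff $\wedge v_i\cap\wedge v_j\neq\emptyset$ for all $i,j$; $N_\lambda$ is its subcomplex with the same vertices in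 which $\{v_1,\dots,v_k\}$ spans a simplex iff $\bigcap_i\wedge v_i\neq\emptyset$. For $\lambda\subset\mu$, $\pi^\mu_\lambda$ is the simplicial map sending a vertex $v$ to $v|_\lambda$. $N_\infty=\varprojlim(N_\lambda,\pi^\mu_\lambda;\Lambda)$ with projections $\pi_\lambda$, $z(\lambda)=\pi_\lambda(z)$, and $N^{(0)}_\infty=\varprojlim(N^{(0)}_\lambda,\pi^\mu_\lambda|;\Lambda)\subset N_\infty$. For $a\in N_\lambda$, $\sigma_\lambda(a)$ is the unique simplex containing $a$ in its interior, and $\wedge a=\bigcap\{\wedge v: v\text{ a vertex of }\sigma_\lambda(a)\}$. For each $z\in N_\infty$ the set $\bigcap_{\lambda\in\Lambda}\wedge z(\lambda)$ consists of exactly one point, and $\pi:N_\infty\to X$ is defined by $\{\pi(z)\}=\bigcap_{\lambda}\wedge z(\lambda)$. *)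

theory Defs
  imports "HOL-Analysis.Analysis"
begin

definition tychonoff_space :: "'a topology \<Rightarrow> bool" where
  "tychonoff_space X \<longleftrightarrow> completely_regular_space X \<and> Hausdorff_space X"

definition uniformity_on :: "'a set \<Rightarrow> ('a \<times> 'a) set set \<Rightarrow> bool" where
  "uniformity_on S U \<longleftrightarrow>
     U \<noteq> {} \<and>
     (\<forall>E\<in>U. E \<subseteq> S \<times> S \<and> Id_on S \<subseteq> E) \<and>
     (\<forall>E F. E \<in> U \<and> E \<subseteq> F \<and> F \<subseteq> S \<times> S \<longrightarrow> F \<in> U) \<and>
     (\<forall>E\<in>U. \<forall>F\<in>U. E \<inter> F \<in> U) \<and>
     (\<forall>E\<in>U. E\<inverse> \<in> U) \<and>
     (\<forall>E\<in>U. \<exists>F\<in>U. F O F \<subseteq> E)"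

definition compatible_uniformity :: "'a topology \<Rightarrow> ('a \<times> 'a) set set \<Rightarrow> bool" where
  "compatible_uniformity X U \<longleftrightarrow>
     uniformity_on (topspace X) U \<and>
     (\<forall>W. openin X W \<longleftrightarrow> W \<subseteq> topspace X \<and> (\<forall>x\<in>W. \<exists>E\<in>U. E `` {x} \<subseteq> W))"

definition finest_uniformity :: "'a topology \<Rightarrow> ('a \<times> 'a) set set \<Rightarrow> bool" where
  "finest_uniformity X U \<longleftrightarrow>
     compatible_uniformity X U \<and> (\<forall>U'. compatible_uniformity X U' \<longrightarrow> U' \<subseteq> U)"

definition cauchy_filter_unif :: "('a \<times> 'a) set set \<Rightarrow> 'a filter \<Rightarrow> bool" where
  "cauchy_filter_unif U F \<longleftrightarrow> (\<forall>E\<in>U. \<exists>A. eventually (\<lambda>x. x \<in> A) F \<and> A \<times> A \<subseteq> E)"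

definition complete_uniformity :: "'a topology \<Rightarrow> ('a \<times> 'a) set set \<Rightarrow> bool" where
  "complete_uniformity X U \<longleftrightarrow>
     (\<forall>F. F \<noteq> bot \<and> eventually (\<lambda>x. x \<in> topspace X) F \<and> cauchy_filter_unif U F \<longrightarrow>
        (\<exists>x\<in>topspace X. \<forall>W. openin X W \<and> x \<in> W \<longrightarrow> eventually (\<lambda>y. y \<in> W) F))"

definition topologically_complete :: "'a topology \<Rightarrow> bool" where
  "topologically_complete X \<longleftrightarrow> tychonoff_space X \<and>
     (\<exists>U. finest_uniformity X U \<and> complete_uniformity X U)"

definition star :: "'a set set \<Rightarrow> 'a set \<Rightarrow> 'a set set" where
  "star \<alpha> S = {V \<in> \<alpha>. V \<inter> S \<noteq> {}}"

definition closed_lf_normal_cover :: "'a topology \<Rightarrow> 'a set set \<Rightarrow> bool" where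
  "closed_lf_normal_cover X \<alpha> \<longleftrightarrow>
     (\<forall>V\<in>\<alpha>. closedin X V) \<and> \<Union>\<alpha> = topspace X \<and> locally_finite_in X \<alpha> \<and>
     (\<exists>\<phi> :: 'a set \<Rightarrow> 'a \<Rightarrow> real.
        (\<forall>V\<in>\<alpha>. continuous_map X (top_of_set {0..1}) (\<phi> V)) \<and>
        (\<forall>V\<in>\<alpha>. X closure_of {x \<in> topspace X. \<phi> V x > 0} \<subseteq> X interior_of V) \<and>
        (\<forall>x\<in>topspace X. (\<Sum>V\<in>{V\<in>\<alpha>. x \<in> V}. \<phi> V x) = 1))"

definition condition_I :: "'a topology \<Rightarrow> 'a set set set \<Rightarrow> bool" where
  "condition_I X \<A> \<longleftrightarrow>
     (\<forall>U x. openin X U \<and> x \<in> U \<longrightarrow> (\<exists>\<alpha>\<in>\<A>. \<Union>(star \<alpha> {x}) \<subseteq> U))"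

definition condition_II :: "'a set set set \<Rightarrow> bool" where
  "condition_II \<A> \<longleftrightarrow>
     (\<forall>f. (\<forall>\<alpha>\<in>\<A>. f \<alpha> \<in> \<alpha>) \<and>
          (\<forall>\<F>. finite \<F> \<and> \<F> \<subseteq> \<A> \<and> \<F> \<noteq> {} \<longrightarrow> \<Inter>(f ` \<F>) \<noteq> {})
        \<longrightarrow> \<Inter>(f ` \<A>) \<noteq> {})"

definition Lam :: "'a set set set \<Rightarrow> 'a set set set set" where
  "Lam \<A> = {l. finite l \<and> l \<subseteq> \<A>}"

text \<open>For a vertex v (a choice function on lambda), wedge of v; the empty intersection is X.\<close>
definition wedge :: "'a topology \<Rightarrow> 'a set set set \<Rightarrow> ('a set set \<Rightarrow> 'a set) \<Rightarrow> 'a set" where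
  "wedge X l v = topspace X \<inter> (\<Inter>\<alpha>\<in>l. v \<alpha>)"

definition N0 :: "'a topology \<Rightarrow> 'a set set set \<Rightarrow> ('a set set \<Rightarrow> 'a set) set" where
  "N0 X l = {v \<in> (\<Pi>\<^sub>E \<alpha>\<in>l. \<alpha>). wedge X l v \<noteq> {}}"

definition cov :: "'a topology \<Rightarrow> 'a set set set \<Rightarrow> 'a set set" where
  "cov X l = wedge X l ` N0 X l"

definition is_simplex :: "'a topology \<Rightarrow> 'a set set set \<Rightarrow> ('a set set \<Rightarrow> 'a set) set \<Rightarrow> bool" where
  "is_simplex X l \<sigma> \<longleftrightarrow> finite \<sigma> \<and> \<sigma> \<noteq> {} \<and> \<sigma> \<subseteq> N0 X l \<and> (\<Inter>v\<in>\<sigma>. wedge X l v) \<noteq> {}"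

text \<open>Geometric (closed) simplex spanned by a finite vertex set, points given by
  barycentric coordinates.\<close>
definition geom_simplex :: "'v set \<Rightarrow> ('v \<Rightarrow> real) set" where
  "geom_simplex \<sigma> = {a. (\<forall>v. 0 \<le> a v) \<and> (\<forall>v. v \<notin> \<sigma> \<longrightarrow> a v = 0) \<and> sum a \<sigma> = 1}"

definition Npoly :: "'a topology \<Rightarrow> 'a set set set \<Rightarrow> (('a set set \<Rightarrow> 'a set) \<Rightarrow> real) set" where
  "Npoly X l = (\<Union>\<sigma>\<in>{\<sigma>. is_simplex X l \<sigma>}. geom_simplex \<sigma>)"

definition weak_open :: "'a topology \<Rightarrow> 'a set set set \<Rightarrow> (('a set set \<Rightarrow> 'a set) \<Rightarrow> real) set \<Rightarrow> bool" where
  "weak_open X l U \<longleftrightarrow> U \<subseteq> Npoly X l \<and>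
     (\<forall>\<sigma>. is_simplex X l \<sigma> \<longrightarrow> openin (top_of_set (geom_simplex \<sigma>)) (U \<inter> geom_simplex \<sigma>))"

lemma istopology_weak_open: "istopology (weak_open X l)"
  unfolding istopology_def
proof (intro conjI allI impI)
  fix S T assume "weak_open X l S" "weak_open X l T"
  then show "weak_open X l (S \<inter> T)"
    unfolding weak_open_def
  proof (intro conjI allI impI)
    show "S \<inter> T \<subseteq> Npoly X l" using \<open>weak_open X l S\<close> by (auto simp: weak_open_def)
    fix \<sigma> assume s: "is_simplex X l \<sigma>"
    have "openin (top_of_set (geom_simplex \<sigma>)) ((S \<inter> geom_simplex \<sigma>) \<inter> (T \<inter> geom_simplex \<sigma>))"
      using s \<open>weak_open X l S\<close> \<open>weak_open X l T\<close> unfolding weak_open_def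
      by (intro openin_Int[of _ "S \<inter> geom_simplex \<sigma>" "T \<inter> geom_simplex \<sigma>"]) auto
    moreover have "(S \<inter> geom_simplex \<sigma>) \<inter> (T \<inter> geom_simplex \<sigma>) = S \<inter> T \<inter> geom_simplex \<sigma>" by auto
    ultimately show "openin (top_of_set (geom_simplex \<sigma>)) (S \<inter> T \<inter> geom_simplex \<sigma>)" by simp
  qed
next
  fix K assume K: "\<forall>S\<in>K. weak_open X l S"
  show "weak_open X l (\<Union>K)"
    unfolding weak_open_def
  proof (intro conjI allI impI)
    show "\<Union>K \<subseteq> Npoly X l" using K by (auto simp: weak_open_def)
    fix \<sigma> assume "is_simplex X l \<sigma>"
    then have "\<forall>S\<in>K. openin (top_of_set (geom_simplex \<sigma>)) (S \<inter> geom_simplex \<sigma>)"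
      using K by (auto simp: weak_open_def)
    then have "openin (top_of_set (geom_simplex \<sigma>)) (\<Union>S\<in>K. S \<inter> geom_simplex \<sigma>)"
      using openin_Union[of "(\<lambda>S. S \<inter> geom_simplex \<sigma>) ` K" "top_of_set (geom_simplex \<sigma>)"] by auto
    moreover have "(\<Union>S\<in>K. S \<inter> geom_simplex \<sigma>) = \<Union>K \<inter> geom_simplex \<sigma>" by auto
    ultimately show "openin (top_of_set (geom_simplex \<sigma>)) (\<Union>K \<inter> geom_simplex \<sigma>)" by simp
  qed
qed

definition Ntop :: "'a topology \<Rightarrow> 'a set set set \<Rightarrow> (('a set set \<Rightarrow> 'a set) \<Rightarrow> real) topology" where
  "Ntop X l = topology (weak_open X l)"

definition vertex_pt :: "'v \<Rightarrow> ('v \<Rightarrow> real)" where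
  "vertex_pt v = (\<lambda>w. if w = v then 1 else 0)"

text \<open>Vertex set of sigma_l(a), the simplex containing a in its interior.\<close>
definition carrier_simplex :: "('v \<Rightarrow> real) \<Rightarrow> 'v set" where
  "carrier_simplex a = {v. a v \<noteq> 0}"

definition wedge_pt :: "'a topology \<Rightarrow> 'a set set set \<Rightarrow> (('a set set \<Rightarrow> 'a set) \<Rightarrow> real) \<Rightarrow> 'a set" where
  "wedge_pt X l a = topspace X \<inter> (\<Inter>v\<in>carrier_simplex a. wedge X l v)"

text \<open>Bonding map pi^m_l: the simplicial map induced by restriction of v to l, extended linearly.\<close>
definition bond :: "'a set set set \<Rightarrow> (('a set set \<Rightarrow> 'a set) \<Rightarrow> real) \<Rightarrow> (('a set set \<Rightarrow> 'a set) \<Rightarrow> real)" where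
  "bond l a = (\<lambda>w. \<Sum>v\<in>{v. a v \<noteq> 0 \<and> restrict v l = w}. a v)"

definition Ninf :: "'a topology \<Rightarrow> 'a set set set \<Rightarrow> ('a set set set \<Rightarrow> (('a set set \<Rightarrow> 'a set) \<Rightarrow> real)) set" where
  "Ninf X \<A> = {z \<in> (\<Pi>\<^sub>E l\<in>Lam \<A>. Npoly X l).
      \<forall>l\<in>Lam \<A>. \<forall>m\<in>Lam \<A>. l \<subseteq> m \<longrightarrow> bond l (z m) = z l}"

definition Ninf_top :: "'a topology \<Rightarrow> 'a set set set \<Rightarrow> ('a set set set \<Rightarrow> (('a set set \<Rightarrow> 'a set) \<Rightarrow> real)) topology" where
  "Ninf_top X \<A> = subtopology (product_topology (\<lambda>l. Ntop X l) (Lam \<A>)) (Ninf X \<A>)"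

definition N0inf :: "'a topology \<Rightarrow> 'a set set set \<Rightarrow> ('a set set set \<Rightarrow> (('a set set \<Rightarrow> 'a set) \<Rightarrow> real)) set" where
  "N0inf X \<A> = {z \<in> Ninf X \<A>. \<forall>l\<in>Lam \<A>. \<exists>v\<in>N0 X l. z l = vertex_pt v}"

definition pi_map :: "'a topology \<Rightarrow> 'a set set set \<Rightarrow> ('a set set set \<Rightarrow> (('a set set \<Rightarrow> 'a set) \<Rightarrow> real)) \<Rightarrow> 'a" where
  "pi_map X \<A> z = (THE x. x \<in> topspace X \<and> (\<forall>l\<in>Lam \<A>. x \<in> wedge_pt X l (z l)))"

end

theory Submission
  imports Defs
begin

text \<open>A point z of the inverse limit selects, for every cover \<alpha> \<in> \<A>, the nonempty family of
  members v \<alpha> with v a vertex of \<sigma>(z({\<alpha>})), and \<pi>(z) is the unique point lying in all selected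
  members. Because the bonding maps are simplicial, finitely many selected families always have a
  common point, so condition (II) yields a point in any choice of selected members; condition (I),
  together with local finiteness, shows that two points each meeting every selected family
  coincide. Continuity follows since the open star of \<sigma>(z({\<alpha>})) forces \<pi> into the members of \<alpha>
  containing \<pi>(z), whose union is small by (I). Statements (2) and (3) only compare the selected
  families of two points.\<close>

definition centered_selection :: "'a set set set \<Rightarrow> ('a set set \<Rightarrow> 'a set set) \<Rightarrow> bool" where
  "centered_selection \<A> S \<longleftrightarrow>
     (\<forall>\<alpha>\<in>\<A>. S \<alpha> \<subseteq> \<alpha> \<and> S \<alpha> \<noteq> {}) \<and>
     (\<forall>F. finite F \<and> F \<subseteq> \<A> \<longrightarrow> \<Inter>(\<Union>(S ` F)) \<noteq> {})"

lemma centered_selection_subset: "centered_selection \<A> S \<Longrightarrow> \<alpha> \<in> \<A> \<Longrightarrow> S \<alpha> \<subseteq> \<alpha>"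
  unfolding centered_selection_def by blast

lemma centered_selection_nonempty: "centered_selection \<A> S \<Longrightarrow> \<alpha> \<in> \<A> \<Longrightarrow> S \<alpha> \<noteq> {}"
  unfolding centered_selection_def by blast

lemma centered_selection_common_point:
  assumes "centered_selection \<A> S" "finite F" "F \<subseteq> \<A>"
  obtains q where "\<And>\<alpha> V. \<alpha> \<in> F \<Longrightarrow> V \<in> S \<alpha> \<Longrightarrow> q \<in> V"
  using assms unfolding centered_selection_def by (metis InterD UN_I equals0I)

lemma condition_ID:
  assumes "condition_I X \<A>" "openin X U" "x \<in> U"
  obtains \<alpha> where "\<alpha> \<in> \<A>" "\<Union>(star \<alpha> {x}) \<subseteq> U"
  using assms unfolding condition_I_def by blast

lemma closed_lf_normal_cover_subset:
  "closed_lf_normal_cover X \<alpha> \<Longrightarrow> V \<in> \<alpha> \<Longrightarrow> V \<subseteq> topspace X"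
  unfolding closed_lf_normal_cover_def by blast

lemma closedin_Union_avoiding:
  assumes "closed_lf_normal_cover X \<alpha>"
  shows "closedin X (\<Union>{V \<in> \<alpha>. x \<notin> V})"
  using assms unfolding closed_lf_normal_cover_def
  by (intro closedin_locally_finite_Union) (auto intro: locally_finite_in_subset)

text \<open>Condition (I) is applied twice: first to separate x from y by a cover \<alpha>, then to push a
  neighbourhood of x off all members of \<alpha> missing x.\<close>
lemma centered_selection_separates:
  assumes "t1_space X" and covers: "\<forall>\<alpha>\<in>\<A>. closed_lf_normal_cover X \<alpha>"
    and I: "condition_I X \<A>" and S: "centered_selection \<A> S"
    and x: "x \<in> topspace X" "\<forall>\<alpha>\<in>\<A>. \<exists>V\<in>S \<alpha>. x \<in> V"
    and y: "y \<in> topspace X" "\<forall>\<alpha>\<in>\<A>. \<exists>V\<in>S \<alpha>. y \<in> V"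
  shows "x = y"
proof (rule ccontr)
  assume "x \<noteq> y"
  have "openin X (topspace X - {y})"
    using \<open>t1_space X\<close> y(1) by (simp add: closedin_t1_singleton openin_diff)
  moreover have "x \<in> topspace X - {y}" using x(1) \<open>x \<noteq> y\<close> by blast
  ultimately obtain \<alpha> where \<alpha>: "\<alpha> \<in> \<A>" "\<Union>(star \<alpha> {x}) \<subseteq> topspace X - {y}"
    by (rule condition_ID[OF I])
  let ?B = "\<Union>{V \<in> \<alpha>. x \<notin> V}"
  have "openin X (topspace X - ?B)"
    using closedin_Union_avoiding[of X \<alpha> x] covers \<alpha>(1) by (simp add: openin_diff)
  moreover have "x \<in> topspace X - ?B" using x(1) by blast
  ultimately obtain \<beta> where \<beta>: "\<beta> \<in> \<A>" "\<Union>(star \<beta> {x}) \<subseteq> topspace X - ?B"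
    by (rule condition_ID[OF I])
  obtain q where q: "\<And>\<gamma> V. \<gamma> \<in> {\<alpha>, \<beta>} \<Longrightarrow> V \<in> S \<gamma> \<Longrightarrow> q \<in> V"
    using centered_selection_common_point[OF S, of "{\<alpha>, \<beta>}"] \<alpha>(1) \<beta>(1) by blast
  obtain Vx where Vx: "Vx \<in> S \<beta>" "x \<in> Vx" using x(2) \<beta>(1) by blast
  obtain Vy where Vy: "Vy \<in> S \<alpha>" "y \<in> Vy" using y(2) \<alpha>(1) by blast
  have "Vx \<in> star \<beta> {x}"
    using Vx centered_selection_subset[OF S \<beta>(1)] unfolding star_def by blast
  then have "q \<notin> ?B" using \<beta>(2) q[of \<beta> Vx] Vx(1) by blast
  moreover have "q \<in> Vy" "Vy \<in> \<alpha>"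
    using q[of \<alpha> Vy] Vy(1) centered_selection_subset[OF S \<alpha>(1)] by auto
  ultimately have "Vy \<in> star \<alpha> {x}" unfolding star_def by blast
  then show False using \<alpha>(2) Vy(2) by blast
qed

lemma condition_II_centered_selection:
  assumes II: "condition_II \<A>" and S: "centered_selection \<A> S" and f: "\<forall>\<alpha>\<in>\<A>. f \<alpha> \<in> S \<alpha>"
  shows "\<Inter>(f ` \<A>) \<noteq> {}"
proof (rule II[unfolded condition_II_def, rule_format], intro conjI ballI allI impI)
  show "f \<alpha> \<in> \<alpha>" if "\<alpha> \<in> \<A>" for \<alpha>
    using f centered_selection_subset[OF S that] that by blast
  show "\<Inter>(f ` F) \<noteq> {}" if F: "finite F \<and> F \<subseteq> \<A> \<and> F \<noteq> {}" for F
  proof -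
    obtain q where "\<And>\<alpha> V. \<alpha> \<in> F \<Longrightarrow> V \<in> S \<alpha> \<Longrightarrow> q \<in> V"
      using centered_selection_common_point[OF S] F by blast
    then have "q \<in> \<Inter>(f ` F)" using f F by blast
    then show ?thesis by blast
  qed
qed

lemma centered_selection_unique_point:
  assumes "t1_space X" and covers: "\<forall>\<alpha>\<in>\<A>. closed_lf_normal_cover X \<alpha>"
    and I: "condition_I X \<A>" and II: "condition_II \<A>"
    and "\<A> \<noteq> {}" and S: "centered_selection \<A> S"
  shows "\<exists>!x. x \<in> topspace X \<and> (\<forall>\<alpha>\<in>\<A>. \<forall>V\<in>S \<alpha>. x \<in> V)"
proof -
  note separates = centered_selection_separates[OF \<open>t1_space X\<close> covers I S]
  have choice_point: "\<exists>x\<in>topspace X. \<forall>\<alpha>\<in>\<A>. x \<in> f \<alpha>" if f: "\<forall>\<alpha>\<in>\<A>. f \<alpha> \<in> S \<alpha>" for f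
  proof -
    obtain x where x: "\<forall>\<alpha>\<in>\<A>. x \<in> f \<alpha>"
      using condition_II_centered_selection[OF II S f] by blast
    obtain \<alpha> where "\<alpha> \<in> \<A>" using \<open>\<A> \<noteq> {}\<close> by blast
    then have "f \<alpha> \<subseteq> topspace X"
      using f centered_selection_subset[OF S] closed_lf_normal_cover_subset covers by blast
    then show ?thesis using x \<open>\<alpha> \<in> \<A>\<close> by blast
  qed
  define f where "f \<alpha> = (SOME V. V \<in> S \<alpha>)" for \<alpha>
  have f: "\<forall>\<alpha>\<in>\<A>. f \<alpha> \<in> S \<alpha>"
    using centered_selection_nonempty[OF S] unfolding f_def by (simp add: some_in_eq)
  then obtain x where x: "x \<in> topspace X" "\<forall>\<alpha>\<in>\<A>. x \<in> f \<alpha>" using choice_point by blast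
  have x_meets: "\<forall>\<alpha>\<in>\<A>. \<exists>V\<in>S \<alpha>. x \<in> V" using x(2) f by blast
  have x_in: "x \<in> V" if "\<alpha> \<in> \<A>" "V \<in> S \<alpha>" for \<alpha> V
  proof -
    have g: "\<forall>\<beta>\<in>\<A>. (f(\<alpha> := V)) \<beta> \<in> S \<beta>" using f that by simp
    then obtain y where y: "y \<in> topspace X" "\<forall>\<beta>\<in>\<A>. y \<in> (f(\<alpha> := V)) \<beta>"
      using choice_point by blast
    have "\<forall>\<beta>\<in>\<A>. \<exists>W\<in>S \<beta>. y \<in> W" using y(2) g by blast
    with x_meets have "x = y" by (rule separates[OF x(1) _ y(1)])
    then show ?thesis using y(2) \<open>\<alpha> \<in> \<A>\<close> by auto
  qed
  show ?thesis
  proof (rule ex1I[of _ x])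
    show "x \<in> topspace X \<and> (\<forall>\<alpha>\<in>\<A>. \<forall>V\<in>S \<alpha>. x \<in> V)" using x(1) x_in by blast
  next
    fix y assume y: "y \<in> topspace X \<and> (\<forall>\<alpha>\<in>\<A>. \<forall>V\<in>S \<alpha>. y \<in> V)"
    then have "\<forall>\<alpha>\<in>\<A>. \<exists>V\<in>S \<alpha>. y \<in> V" using centered_selection_nonempty[OF S] by blast
    with x_meets show "y = x" using separates y x(1) by blast
  qed
qed

lemma is_simplex_carrier_simplex:
  assumes "a \<in> Npoly X l"
  shows "is_simplex X l (carrier_simplex a)"
proof -
  obtain \<sigma> where \<sigma>: "is_simplex X l \<sigma>" and a: "a \<in> geom_simplex \<sigma>"
    using assms unfolding Npoly_def by blast
  have sub: "carrier_simplex a \<subseteq> \<sigma>" using a unfolding geom_simplex_def carrier_simplex_def by auto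
  have "carrier_simplex a \<noteq> {}"
  proof
    assume "carrier_simplex a = {}"
    then have "sum a \<sigma> = 0" unfolding carrier_simplex_def by simp
    then show False using a unfolding geom_simplex_def by simp
  qed
  moreover have "(\<Inter>v\<in>\<sigma>. wedge X l v) \<subseteq> (\<Inter>v\<in>carrier_simplex a. wedge X l v)" using sub by blast
  ultimately show ?thesis using \<sigma> sub finite_subset unfolding is_simplex_def by auto
qed

lemma Npoly_nonneg: "a \<in> Npoly X l \<Longrightarrow> 0 \<le> a v"
  unfolding Npoly_def geom_simplex_def by blast

lemma wedge_pt_nonempty:
  assumes "a \<in> Npoly X l"
  shows "wedge_pt X l a \<noteq> {}"
proof -
  have \<sigma>: "is_simplex X l (carrier_simplex a)" using is_simplex_carrier_simplex[OF assms] .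
  then obtain q v where "q \<in> (\<Inter>v\<in>carrier_simplex a. wedge X l v)" "v \<in> carrier_simplex a"
    unfolding is_simplex_def by blast
  then have "q \<in> wedge_pt X l a" unfolding wedge_pt_def wedge_def by blast
  then show ?thesis by blast
qed

lemma carrier_simplex_bond:
  assumes fin: "finite (carrier_simplex a)" and nonneg: "\<And>v. 0 \<le> a v"
  shows "carrier_simplex (bond l a) = (\<lambda>v. restrict v l) ` carrier_simplex a"
proof (intro set_eqI)
  fix w
  let ?T = "{v. a v \<noteq> 0 \<and> restrict v l = w}"
  have "finite ?T" using fin by (rule finite_subset[rotated]) (auto simp: carrier_simplex_def)
  then have "sum a ?T \<noteq> 0 \<longleftrightarrow> ?T \<noteq> {}" using nonneg by (auto simp: sum_nonneg_eq_0_iff)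
  then show "w \<in> carrier_simplex (bond l a) \<longleftrightarrow> w \<in> (\<lambda>v. restrict v l) ` carrier_simplex a"
    unfolding carrier_simplex_def bond_def by auto
qed

lemma Ninf_Npoly: "z \<in> Ninf X \<A> \<Longrightarrow> l \<in> Lam \<A> \<Longrightarrow> z l \<in> Npoly X l"
  unfolding Ninf_def by auto

lemma carrier_simplex_Ninf:
  assumes z: "z \<in> Ninf X \<A>" and "l \<in> Lam \<A>" "m \<in> Lam \<A>" "l \<subseteq> m"
  shows "carrier_simplex (z l) = (\<lambda>v. restrict v l) ` carrier_simplex (z m)"
proof -
  have "z m \<in> Npoly X m" using Ninf_Npoly[OF z \<open>m \<in> Lam \<A>\<close>] .
  then have "carrier_simplex (bond l (z m)) = (\<lambda>v. restrict v l) ` carrier_simplex (z m)"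
    using carrier_simplex_bond is_simplex_carrier_simplex Npoly_nonneg
    unfolding is_simplex_def by metis
  moreover have "bond l (z m) = z l" using assms unfolding Ninf_def by blast
  ultimately show ?thesis by simp
qed

lemma singleton_Lam: "\<alpha> \<in> \<A> \<Longrightarrow> {\<alpha>} \<in> Lam \<A>"
  unfolding Lam_def by auto

lemma Lam_subset: "l \<in> Lam \<A> \<Longrightarrow> l \<subseteq> \<A>"
  unfolding Lam_def by auto

definition carrier_members :: "('a set set set \<Rightarrow> (('a set set \<Rightarrow> 'a set) \<Rightarrow> real)) \<Rightarrow> 'a set set \<Rightarrow> 'a set set" where
  "carrier_members z \<alpha> = (\<lambda>v. v \<alpha>) ` carrier_simplex (z {\<alpha>})"

lemma carrier_members_Ninf:
  assumes z: "z \<in> Ninf X \<A>" and l: "l \<in> Lam \<A>" and "\<alpha> \<in> l"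
  shows "carrier_members z \<alpha> = (\<lambda>v. v \<alpha>) ` carrier_simplex (z l)"
proof -
  have "{\<alpha>} \<in> Lam \<A>" using singleton_Lam Lam_subset l \<open>\<alpha> \<in> l\<close> by blast
  then have "carrier_simplex (z {\<alpha>}) = (\<lambda>v. restrict v {\<alpha>}) ` carrier_simplex (z l)"
    using carrier_simplex_Ninf[OF z _ l] \<open>\<alpha> \<in> l\<close> by blast
  then show ?thesis unfolding carrier_members_def by (simp add: image_image)
qed

lemma wedge_pt_Ninf_iff:
  assumes "z \<in> Ninf X \<A>" and "l \<in> Lam \<A>"
  shows "x \<in> wedge_pt X l (z l) \<longleftrightarrow> x \<in> topspace X \<and> (\<forall>\<alpha>\<in>l. \<forall>V\<in>carrier_members z \<alpha>. x \<in> V)"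
  using carrier_members_Ninf[OF assms] unfolding wedge_pt_def wedge_def by auto

lemma in_all_wedge_pts_iff:
  assumes "z \<in> Ninf X \<A>"
  shows "(x \<in> topspace X \<and> (\<forall>l\<in>Lam \<A>. x \<in> wedge_pt X l (z l))) \<longleftrightarrow>
    x \<in> topspace X \<and> (\<forall>\<alpha>\<in>\<A>. \<forall>V\<in>carrier_members z \<alpha>. x \<in> V)"
  using wedge_pt_Ninf_iff[OF assms] singleton_Lam Lam_subset by (metis singletonI subsetD)

lemma carrier_members_subset:
  assumes "z \<in> Ninf X \<A>" and "\<alpha> \<in> \<A>"
  shows "carrier_members z \<alpha> \<subseteq> \<alpha>" "carrier_members z \<alpha> \<noteq> {}"
proof -
  have "is_simplex X {\<alpha>} (carrier_simplex (z {\<alpha>}))"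
    using is_simplex_carrier_simplex Ninf_Npoly[OF assms(1) singleton_Lam[OF assms(2)]] by blast
  then show "carrier_members z \<alpha> \<subseteq> \<alpha>" "carrier_members z \<alpha> \<noteq> {}"
    unfolding is_simplex_def carrier_members_def N0_def by auto
qed

lemma centered_selection_carrier_members:
  assumes z: "z \<in> Ninf X \<A>" and z': "z' \<in> Ninf X \<A>"
    and meet: "\<forall>l\<in>Lam \<A>. wedge_pt X l (z l) \<inter> wedge_pt X l (z' l) \<noteq> {}"
  shows "centered_selection \<A> (\<lambda>\<alpha>. carrier_members z \<alpha> \<union> carrier_members z' \<alpha>)"
  unfolding centered_selection_def
proof (intro conjI allI impI ballI)
  fix \<alpha> assume "\<alpha> \<in> \<A>"
  then show "carrier_members z \<alpha> \<union> carrier_members z' \<alpha> \<subseteq> \<alpha>"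
    "carrier_members z \<alpha> \<union> carrier_members z' \<alpha> \<noteq> {}"
    using carrier_members_subset[OF z] carrier_members_subset[OF z'] by auto
next
  fix F assume "finite F \<and> F \<subseteq> \<A>"
  then have F: "F \<in> Lam \<A>" unfolding Lam_def by blast
  then obtain q where "q \<in> wedge_pt X F (z F)" "q \<in> wedge_pt X F (z' F)" using meet by blast
  then have "q \<in> \<Inter>(\<Union>\<alpha>\<in>F. carrier_members z \<alpha> \<union> carrier_members z' \<alpha>)"
    using wedge_pt_Ninf_iff[OF z F] wedge_pt_Ninf_iff[OF z' F] by blast
  then show "\<Inter>(\<Union>\<alpha>\<in>F. carrier_members z \<alpha> \<union> carrier_members z' \<alpha>) \<noteq> {}" by blast
qed

lemma centered_selection_Ninf:
  assumes z: "z \<in> Ninf X \<A>"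
  shows "centered_selection \<A> (carrier_members z)"
proof -
  have "\<forall>l\<in>Lam \<A>. wedge_pt X l (z l) \<inter> wedge_pt X l (z l) \<noteq> {}"
    using wedge_pt_nonempty[OF Ninf_Npoly[OF z]] by simp
  then have "centered_selection \<A> (\<lambda>\<alpha>. carrier_members z \<alpha> \<union> carrier_members z \<alpha>)"
    by (rule centered_selection_carrier_members[OF z z])
  then show ?thesis by simp
qed

lemma carrier_simplex_vertex_pt: "carrier_simplex (vertex_pt v) = {v}"
  unfolding carrier_simplex_def vertex_pt_def by auto

lemma wedge_pt_vertex_pt: "wedge_pt X l (vertex_pt v) = wedge X l v"
  unfolding wedge_pt_def carrier_simplex_vertex_pt wedge_def by auto

lemma openin_Ntop_open_star: "openin (Ntop X l) {a \<in> Npoly X l. carrier_simplex a \<inter> C \<noteq> {}}"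
proof -
  let ?W = "{a \<in> Npoly X l. carrier_simplex a \<inter> C \<noteq> {}}"
  have "openin (top_of_set (geom_simplex \<sigma>)) (?W \<inter> geom_simplex \<sigma>)" if "is_simplex X l \<sigma>" for \<sigma>
  proof -
    have "a v \<noteq> 0 \<longleftrightarrow> 0 < a v" if "a \<in> geom_simplex \<sigma>" for a v
      using that unfolding geom_simplex_def by (simp add: order.strict_iff_order)
    moreover have "geom_simplex \<sigma> \<subseteq> Npoly X l" using \<open>is_simplex X l \<sigma>\<close> unfolding Npoly_def by blast
    ultimately have "?W \<inter> geom_simplex \<sigma> = geom_simplex \<sigma> \<inter> (\<Union>v\<in>C. {a. 0 < a v})"
      unfolding carrier_simplex_def by auto
    moreover have "open (\<Union>v\<in>C. {a :: ('a set set \<Rightarrow> 'a set) \<Rightarrow> real. 0 < a v})"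
      by (intro open_UN ballI open_Collect_less) simp_all
    ultimately show ?thesis by (simp add: openin_open_Int)
  qed
  then have "weak_open X l ?W" unfolding weak_open_def by blast
  then show ?thesis unfolding Ntop_def by (simp add: istopology_weak_open)
qed

lemma topspace_Ninf_top_subset: "topspace (Ninf_top X \<A>) \<subseteq> Ninf X \<A>"
  unfolding Ninf_top_def by simp

lemma openin_Ninf_top_open_star:
  assumes "\<alpha> \<in> \<A>"
  shows "openin (Ninf_top X \<A>) {z \<in> topspace (Ninf_top X \<A>). carrier_simplex (z {\<alpha>}) \<inter> C \<noteq> {}}"
proof -
  have "openin (Ninf_top X \<A>)
      {z \<in> topspace (Ninf_top X \<A>). z {\<alpha>} \<in> {a \<in> Npoly X {\<alpha>}. carrier_simplex a \<inter> C \<noteq> {}}}"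
    unfolding Ninf_top_def
    by (intro openin_continuous_map_preimage[OF _ openin_Ntop_open_star]
        continuous_map_from_subtopology continuous_map_product_projection singleton_Lam assms)
  moreover have "z {\<alpha>} \<in> Npoly X {\<alpha>}" if "z \<in> topspace (Ninf_top X \<A>)" for z
    using Ninf_Npoly topspace_Ninf_top_subset singleton_Lam[OF assms] that by blast
  then have "{z \<in> topspace (Ninf_top X \<A>). z {\<alpha>} \<in> {a \<in> Npoly X {\<alpha>}. carrier_simplex a \<inter> C \<noteq> {}}}
      = {z \<in> topspace (Ninf_top X \<A>). carrier_simplex (z {\<alpha>}) \<inter> C \<noteq> {}}"
    by auto
  ultimately show ?thesis by simp
qed

locale admissible_covers =
  fixes X :: "'a topology" and \<A> :: "'a set set set"
  assumes t1: "t1_space X"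
    and covers: "\<forall>\<alpha>\<in>\<A>. closed_lf_normal_cover X \<alpha>"
    and I: "condition_I X \<A>"
    and II: "condition_II \<A>"
begin

lemma pi_map_eq_iff:
  assumes z: "z \<in> Ninf X \<A>"
  shows "pi_map X \<A> z = x \<longleftrightarrow> x \<in> topspace X \<and> (\<forall>\<alpha>\<in>\<A>. \<forall>V\<in>carrier_members z \<alpha>. x \<in> V)"
proof -
  have "{} \<in> Lam \<A>" unfolding Lam_def by simp
  then obtain x0 where "x0 \<in> topspace X"
    using wedge_pt_nonempty[OF Ninf_Npoly[OF z]] unfolding wedge_pt_def by blast
  then have "\<A> \<noteq> {}" using condition_ID[OF I openin_topspace] by blast
  then have "\<exists>!x. x \<in> topspace X \<and> (\<forall>\<alpha>\<in>\<A>. \<forall>V\<in>carrier_members z \<alpha>. x \<in> V)"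
    using centered_selection_Ninf[OF z] by (rule centered_selection_unique_point[OF t1 covers I II])
  then have unique: "\<exists>!x. x \<in> topspace X \<and> (\<forall>l\<in>Lam \<A>. x \<in> wedge_pt X l (z l))"
    by (simp only: in_all_wedge_pts_iff[OF z])
  show ?thesis
  proof
    assume "pi_map X \<A> z = x"
    then have "x \<in> topspace X \<and> (\<forall>l\<in>Lam \<A>. x \<in> wedge_pt X l (z l))"
      using theI'[OF unique] unfolding pi_map_def by simp
    then show "x \<in> topspace X \<and> (\<forall>\<alpha>\<in>\<A>. \<forall>V\<in>carrier_members z \<alpha>. x \<in> V)"
      by (rule in_all_wedge_pts_iff[OF z, THEN iffD1])
  next
    assume "x \<in> topspace X \<and> (\<forall>\<alpha>\<in>\<A>. \<forall>V\<in>carrier_members z \<alpha>. x \<in> V)"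
    then have "x \<in> topspace X \<and> (\<forall>l\<in>Lam \<A>. x \<in> wedge_pt X l (z l))"
      by (rule in_all_wedge_pts_iff[OF z, THEN iffD2])
    then show "pi_map X \<A> z = x" unfolding pi_map_def by (rule the1_equality[OF unique])
  qed
qed

lemma pi_map_mem:
  assumes "z \<in> Ninf X \<A>"
  shows "pi_map X \<A> z \<in> topspace X"
    and "\<alpha> \<in> \<A> \<Longrightarrow> V \<in> carrier_members z \<alpha> \<Longrightarrow> pi_map X \<A> z \<in> V"
  using pi_map_eq_iff[OF assms, THEN iffD1, OF refl] by blast+

lemma pi_map_in_wedge_pt:
  assumes z: "z \<in> Ninf X \<A>" and "l \<in> Lam \<A>"
  shows "pi_map X \<A> z \<in> wedge_pt X l (z l)"
  using pi_map_eq_iff[OF z, THEN iffD1, OF refl] in_all_wedge_pts_iff[OF z] \<open>l \<in> Lam \<A>\<close>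
  by blast

lemma continuous_map_pi_map: "continuous_map (Ninf_top X \<A>) X (pi_map X \<A>)"
proof -
  have "\<exists>T. openin (Ninf_top X \<A>) T \<and> z \<in> T \<and> (\<forall>z'\<in>T. pi_map X \<A> z' \<in> U)"
    if zN: "z \<in> topspace (Ninf_top X \<A>)" and U: "openin X U" "pi_map X \<A> z \<in> U" for z U
  proof -
    have z: "z \<in> Ninf X \<A>" using zN topspace_Ninf_top_subset by blast
    obtain \<alpha> where \<alpha>: "\<alpha> \<in> \<A>" "\<Union>(star \<alpha> {pi_map X \<A> z}) \<subseteq> U"
      using condition_ID[OF I U] by blast
    define T where "T = {z' \<in> topspace (Ninf_top X \<A>).
        carrier_simplex (z' {\<alpha>}) \<inter> carrier_simplex (z {\<alpha>}) \<noteq> {}}"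
    have "openin (Ninf_top X \<A>) T" unfolding T_def by (rule openin_Ninf_top_open_star[OF \<alpha>(1)])
    moreover have "z \<in> T"
      using is_simplex_carrier_simplex[OF Ninf_Npoly[OF z singleton_Lam[OF \<alpha>(1)]]] zN
      unfolding T_def is_simplex_def by blast
    moreover have "pi_map X \<A> z' \<in> U" if z'T: "z' \<in> T" for z'
    proof -
      have z': "z' \<in> Ninf X \<A>" using z'T topspace_Ninf_top_subset unfolding T_def by blast
      obtain v where "v \<in> carrier_simplex (z' {\<alpha>})" "v \<in> carrier_simplex (z {\<alpha>})"
        using z'T unfolding T_def by blast
      then have "v \<alpha> \<in> carrier_members z \<alpha>" "v \<alpha> \<in> carrier_members z' \<alpha>"
        unfolding carrier_members_def by auto
      then have "v \<alpha> \<in> star \<alpha> {pi_map X \<A> z}" "pi_map X \<A> z' \<in> v \<alpha>"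
        using pi_map_mem(2)[OF z \<alpha>(1)] pi_map_mem(2)[OF z' \<alpha>(1)] carrier_members_subset[OF z \<alpha>(1)]
        unfolding star_def by blast+
      then show ?thesis using \<alpha>(2) by blast
    qed
    ultimately show ?thesis by blast
  qed
  moreover have "pi_map X \<A> \<in> topspace (Ninf_top X \<A>) \<rightarrow> topspace X"
    using pi_map_mem(1) topspace_Ninf_top_subset by blast
  ultimately show ?thesis unfolding continuous_map_eq_topcontinuous_at topcontinuous_at_def by blast
qed

lemma pi_map_eq_iff_wedge_pts_meet:
  assumes z: "z \<in> Ninf X \<A>" and z': "z' \<in> Ninf X \<A>"
  shows "pi_map X \<A> z' = pi_map X \<A> z \<longleftrightarrow>
    (\<forall>l\<in>Lam \<A>. wedge_pt X l (z l) \<inter> wedge_pt X l (z' l) \<noteq> {})"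
proof
  assume "pi_map X \<A> z' = pi_map X \<A> z"
  then show "\<forall>l\<in>Lam \<A>. wedge_pt X l (z l) \<inter> wedge_pt X l (z' l) \<noteq> {}"
    using pi_map_in_wedge_pt[OF z] pi_map_in_wedge_pt[OF z'] by force
next
  assume "\<forall>l\<in>Lam \<A>. wedge_pt X l (z l) \<inter> wedge_pt X l (z' l) \<noteq> {}"
  then have S: "centered_selection \<A> (\<lambda>\<alpha>. carrier_members z \<alpha> \<union> carrier_members z' \<alpha>)"
    by (rule centered_selection_carrier_members[OF z z'])
  have meets: "\<forall>\<alpha>\<in>\<A>. \<exists>V\<in>carrier_members z \<alpha> \<union> carrier_members z' \<alpha>. pi_map X \<A> y \<in> V"
    if "y \<in> {z, z'}" for y
  proof
    fix \<alpha> assume \<alpha>: "\<alpha> \<in> \<A>"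
    have y: "y \<in> Ninf X \<A>" using that z z' by blast
    then obtain V where V: "V \<in> carrier_members y \<alpha>" using carrier_members_subset(2)[OF y \<alpha>] by blast
    then have "V \<in> carrier_members z \<alpha> \<union> carrier_members z' \<alpha>" using that by blast
    with pi_map_mem(2)[OF y \<alpha> V]
    show "\<exists>V\<in>carrier_members z \<alpha> \<union> carrier_members z' \<alpha>. pi_map X \<A> y \<in> V" by blast
  qed
  show "pi_map X \<A> z' = pi_map X \<A> z"
    by (rule centered_selection_separates[OF t1 covers I S pi_map_mem(1)[OF z'] meets
          pi_map_mem(1)[OF z] meets]) simp_all
qed

lemma pi_map_eq_if_vertex_in_carrier:
  assumes z: "z \<in> Ninf X \<A>" and z0: "z0 \<in> Ninf X \<A>"
    and vertex: "\<forall>l\<in>Lam \<A>. \<exists>v. z0 l = vertex_pt v \<and> v \<in> carrier_simplex (z l)"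
  shows "pi_map X \<A> z = pi_map X \<A> z0"
proof -
  have "carrier_members z0 \<alpha> \<subseteq> carrier_members z \<alpha>" if \<alpha>: "\<alpha> \<in> \<A>" for \<alpha>
  proof -
    obtain v where "z0 {\<alpha>} = vertex_pt v" "v \<in> carrier_simplex (z {\<alpha>})"
      using vertex singleton_Lam[OF \<alpha>] by blast
    then show ?thesis by (simp add: carrier_members_def carrier_simplex_vertex_pt)
  qed
  then have "pi_map X \<A> z0 = pi_map X \<A> z"
    using pi_map_eq_iff[OF z0] pi_map_mem[OF z] by blast
  then show ?thesis by simp
qed

end

theorem proposition2p4:
  fixes X :: "'a topology" and \<A> :: "'a set set set"
  assumes "topologically_complete X"
    and "\<forall>\<alpha>\<in>\<A>. closed_lf_normal_cover X \<alpha>"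
    and "condition_I X \<A>"
    and "condition_II \<A>"
  shows "continuous_map (Ninf_top X \<A>) X (pi_map X \<A>) \<and>
    (\<forall>z\<in>N0inf X \<A>. \<forall>z'\<in>N0inf X \<A>.
       pi_map X \<A> z' = pi_map X \<A> z \<longleftrightarrow>
       (\<forall>l\<in>Lam \<A>. wedge_pt X l (z' l) \<in> star (cov X l) (wedge_pt X l (z l)))) \<and>
    (\<forall>z\<in>Ninf X \<A>. \<forall>z0\<in>N0inf X \<A>.
       (\<forall>l\<in>Lam \<A>. \<exists>v. z0 l = vertex_pt v \<and> v \<in> carrier_simplex (z l))
       \<longrightarrow> pi_map X \<A> z = pi_map X \<A> z0)"
proof -
  have "t1_space X"
    using assms(1) Hausdorff_imp_t1_space
    unfolding topologically_complete_def tychonoff_space_def by blast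
  then interpret admissible_covers X \<A>
    using assms(2-4) by unfold_locales
  have N0inf_Ninf: "z \<in> Ninf X \<A>" if "z \<in> N0inf X \<A>" for z
    using that unfolding N0inf_def by blast
  have star_cov_iff: "wedge_pt X l (z' l) \<in> star (cov X l) (wedge_pt X l (z l)) \<longleftrightarrow>
      wedge_pt X l (z l) \<inter> wedge_pt X l (z' l) \<noteq> {}"
    if "z' \<in> N0inf X \<A>" "l \<in> Lam \<A>" for z z' l
    using that unfolding N0inf_def star_def cov_def by (auto simp: wedge_pt_vertex_pt)
  show ?thesis
    using continuous_map_pi_map pi_map_eq_iff_wedge_pts_meet pi_map_eq_if_vertex_in_carrier
      N0inf_Ninf star_cov_iff
    by (metis (no_types, lifting))
qed

end
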